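(* The functions $\operatorname{IsCode}(n)$, $\operatorname{Len}(n)$, $\operatorname{SymbolAt}(n,i)$, $\operatorname{Concat}(n,m)$, and $\operatorname{Sub}_Z(n,m)$ are primitive recursive.
   Context: Fibonacci numbers: $F_1=1$, $F_2=2$, $F_n=F_{n-1}+F_{n-2}$. Each $n$ has a unique Zeckendorf representation $n=\sum_{e\in S}F_e$ with no two consecutive indices; $Z(n)=S$, listed $e_1>e_2>\cdots$. Cantor pairing $\mathrm{pair}(x,y)=\frac{(x+y)(x+y+1)}{2}+x$ with inverse $\mathrm{unpair}$. $\operatorname{Seq}_Z([a_1,\dots,a_m])=\sum_{i=1}^m F_{2\,\mathrm{pair}(a_i,i)+1}$, empty sequence $\mapsto 0$. $\operatorname{IsCode}(n)$ holds iff $Z(n)$ consists of odd indices with gaps of at least 2. $\operatorname{Len}(n)=|Z(n)|$ if $\operatorname{IsCode}(n)$, else $0$. $\operatorname{SymbolAt}(n,i)=a$ if $\operatorname{IsCode}(n)$, $1\le i\le\operatorname{Len}(n)$ and the $i$-th index $e_i$ (in decreasing order) satisfies $\mathrm{unpair}((e_i-1)/2)=(a,i)$; otherwise $0$. For valid codes $n,m$ decoding to sequences $[a_1,\dots,a_k]$ and $[b_1,\dots,b_l]$, $\operatorname{Concat}(n,m)=\operatorname{Seq}_Z([a_1,\dots,a_k,b_1,\dots,b_l])$. Formulas and terms of a fixed first-order language are coded by $\operatorname{Seq}_Z$ of their sequences of symbol numbers; for $n$ coding a formula $\varphi(x)$ with free variable $x$ and $m$ coding a term $t$, $\operatorname{Sub}_Z(n,m)$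 is obtained by decoding $n$ to its symbol sequence, replacing each occurrence of $\ulcorner x\urcorner$ by the decoded symbol sequence of $m$, and re-encoding via $\operatorname{Seq}_Z$. *)

theory Defs
  imports Main "HOL-Library.Nat_Bijection"
begin

primrec hd0 :: "nat list \<Rightarrow> nat" where
  "hd0 [] = 0"
| "hd0 (m # ms) = m"

definition SC :: "nat list \<Rightarrow> nat" where
  "SC l = Suc (hd0 l)"

definition CONSTANT :: "nat \<Rightarrow> nat list \<Rightarrow> nat" where
  "CONSTANT k l = k"

definition PROJ :: "nat \<Rightarrow> nat list \<Rightarrow> nat" where
  "PROJ i l = hd0 (drop i l)"

definition COMP :: "(nat list \<Rightarrow> nat) \<Rightarrow> (nat list \<Rightarrow> nat) list \<Rightarrow> nat list \<Rightarrow> nat" where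
  "COMP g fs l = g (map (\<lambda>f. f l) fs)"

definition PREC :: "(nat list \<Rightarrow> nat) \<Rightarrow> (nat list \<Rightarrow> nat) \<Rightarrow> nat list \<Rightarrow> nat" where
  "PREC f g l =
    (case l of
      [] \<Rightarrow> 0
    | x # l' \<Rightarrow> rec_nat (f l') (\<lambda>y r. g (r # y # l')) x)"

inductive PRIMREC :: "(nat list \<Rightarrow> nat) \<Rightarrow> bool" where
  SC: "PRIMREC SC"
| CONSTANT: "PRIMREC (CONSTANT k)"
| PROJ: "PRIMREC (PROJ i)"
| COMP: "PRIMREC g \<Longrightarrow> \<forall>f \<in> set fs. PRIMREC f \<Longrightarrow> PRIMREC (COMP g fs)"
| PREC: "PRIMREC f \<Longrightarrow> PRIMREC g \<Longrightarrow> PRIMREC (PREC f g)"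

definition prim_rec1 :: "(nat \<Rightarrow> nat) \<Rightarrow> bool" where
  "prim_rec1 f \<longleftrightarrow> PRIMREC (\<lambda>l. f (hd0 l))"

definition prim_rec2 :: "(nat \<Rightarrow> nat \<Rightarrow> nat) \<Rightarrow> bool" where
  "prim_rec2 f \<longleftrightarrow> PRIMREC (\<lambda>l. f (hd0 l) (hd0 (drop 1 l)))"

fun fibZ :: "nat \<Rightarrow> nat" where
  "fibZ 0 = 1"   \<comment> \<open>auxiliary value, only indices \<ge> 1 are used\<close>
| "fibZ (Suc 0) = 1"
| "fibZ (Suc (Suc n)) = fibZ (Suc n) + fibZ n"

definition zeck_ok :: "nat set \<Rightarrow> bool" where
  "zeck_ok S \<longleftrightarrow> finite S \<and> 0 \<notin> S \<and> (\<forall>i \<in> S. Suc i \<notin> S)"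

definition Z :: "nat \<Rightarrow> nat set" where
  "Z n = (THE S. zeck_ok S \<and> (\<Sum>e\<in>S. fibZ e) = n)"

definition zlist :: "nat \<Rightarrow> nat list" where
  "zlist n = rev (sorted_list_of_set (Z n))"

definition pair :: "nat \<Rightarrow> nat \<Rightarrow> nat" where
  "pair x y = prod_encode (x, y)"

definition unpair :: "nat \<Rightarrow> nat \<times> nat" where
  "unpair n = prod_decode n"

definition SeqZ :: "nat list \<Rightarrow> nat" where
  "SeqZ as = (\<Sum>i = 1..length as. fibZ (2 * pair (as ! (i - 1)) i + 1))"

definition IsCode :: "nat \<Rightarrow> bool" where
  "IsCode n \<longleftrightarrow> (\<forall>e \<in> Z n. odd e) \<and> (\<forall>e \<in> Z n. \<forall>e' \<in> Z n. e < e' \<longrightarrow> e + 2 \<le> e')"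

definition Len :: "nat \<Rightarrow> nat" where
  "Len n = (if IsCode n then card (Z n) else 0)"

definition SymbolAt :: "nat \<Rightarrow> nat \<Rightarrow> nat" where
  "SymbolAt n i =
    (if IsCode n \<and> 1 \<le> i \<and> i \<le> Len n
        \<and> snd (unpair ((zlist n ! (i - 1) - 1) div 2)) = i
     then fst (unpair ((zlist n ! (i - 1) - 1) div 2)) else 0)"

definition decodeZ :: "nat \<Rightarrow> nat list" where
  "decodeZ n = map (SymbolAt n) [1..<Len n + 1]"

definition Concat :: "nat \<Rightarrow> nat \<Rightarrow> nat" where
  "Concat n m = SeqZ (decodeZ n @ decodeZ m)"

text \<open>Substitution; v is the symbol number of the variable x.\<close>
definition SubZ :: "nat \<Rightarrow> nat \<Rightarrow> nat \<Rightarrow> nat" where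
  "SubZ v n m = SeqZ (concat (map (\<lambda>s. if s = v then decodeZ m else [s]) (decodeZ n)))"

end

theory Submission
  imports Defs
begin

(* Each function is rewritten, by a pointwise equation, as a term built from primitive recursive
   operations, bounded sums and bounded quantifiers.  A value that is the unique witness x < N of
   a primitive recursive property P is the bounded sum of (if P y then y else 0) over y < N.

   The Zeckendorf set Z n is reached through its bitmask set_encode (Z n) < 2^(n+1): by uniqueness
   of Zeckendorf representations this is the unique b below the bound whose bit set is a
   Zeckendorf representation of n.  Hence membership in Z n, its cardinality and its j-th largest
   element (the unique e in Z n with exactly j larger elements) are primitive recursive, and so
   are IsCode, Len and SymbolAt.  Finally, SeqZ of a concatenation of blocks is the sum of the
   codes of the blocks with shifted positions, which gives Concat and SubZ. *)

section \<open>Primitive recursive functionals of an environment\<close>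

(* A functional F of an environment e :: nat => nat stands for the function on argument lists
   that pads its argument with zeros; F is PR if that function is PRIMREC and F reads only
   finitely many variables.  Closure rules can then be stated for arbitrary terms A e, B e
   instead of for fixed arities. *)

definition list_env :: "nat list \<Rightarrow> nat \<Rightarrow> nat" where
  "list_env l i = hd0 (drop i l)"

definition env_trunc :: "nat \<Rightarrow> (nat \<Rightarrow> nat) \<Rightarrow> nat \<Rightarrow> nat" where
  "env_trunc k e i = (if i < k then e i else 0)"

definition depends_below :: "nat \<Rightarrow> ((nat \<Rightarrow> nat) \<Rightarrow> nat) \<Rightarrow> bool" where
  "depends_below k F \<longleftrightarrow> (\<forall>e. F e = F (env_trunc k e))"

definition PR :: "((nat \<Rightarrow> nat) \<Rightarrow> nat) \<Rightarrow> bool" where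
  "PR F \<longleftrightarrow> PRIMREC (\<lambda>l. F (list_env l)) \<and> (\<exists>k. depends_below k F)"

definition PR_pred :: "((nat \<Rightarrow> nat) \<Rightarrow> bool) \<Rightarrow> bool" where
  "PR_pred P \<longleftrightarrow> PR (\<lambda>e. of_bool (P e))"

lemma list_env_Cons: "list_env (x # l) = case_nat x (list_env l)"
  by (auto simp: list_env_def fun_eq_iff split: nat.split)

lemma list_env_Cons_0 [simp]: "list_env (x # l) 0 = x"
  and list_env_Cons_Suc [simp]: "list_env (x # l) (Suc i) = list_env l i"
  by (simp_all add: list_env_def)

lemma list_env_map_upt: "list_env (map e [0..<k]) = env_trunc k e"
proof
  fix i
  have "hd0 xs = (if xs = [] then 0 else hd xs)" for xs by (cases xs) auto
  then show "list_env (map e [0..<k]) i = env_trunc k e i"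
    by (simp add: list_env_def env_trunc_def drop_map hd_map)
qed

lemma env_trunc_env_trunc: "k \<le> k' \<Longrightarrow> env_trunc k (env_trunc k' e) = env_trunc k e"
  by (auto simp: env_trunc_def fun_eq_iff)

lemma depends_below_mono: "depends_below k F \<Longrightarrow> k \<le> k' \<Longrightarrow> depends_below k' F"
  unfolding depends_below_def by (metis env_trunc_env_trunc)

lemma depends_below_common:
  "\<forall>F\<in>set Fs. \<exists>k. depends_below k F \<Longrightarrow> \<exists>k. \<forall>F\<in>set Fs. depends_below k F"
proof (induction Fs)
  case (Cons F Fs)
  then obtain k k' where "depends_below k F" "\<forall>F\<in>set Fs. depends_below k' F" by auto
  then show ?case by (intro exI[of _ "max k k'"]) (auto intro: depends_below_mono)
qed simp

lemma prim_rec1_if_PR: "PR (\<lambda>e. f (e 0)) \<Longrightarrow> prim_rec1 f"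
  by (simp add: PR_def prim_rec1_def list_env_def)

lemma prim_rec2_if_PR: "PR (\<lambda>e. f (e 0) (e 1)) \<Longrightarrow> prim_rec2 f"
  by (simp add: PR_def prim_rec2_def list_env_def)

lemma PR_var: "PR (\<lambda>e. e i)"
proof -
  have "(\<lambda>l. list_env l i) = PROJ i" by (simp add: fun_eq_iff list_env_def PROJ_def)
  moreover have "depends_below (Suc i) (\<lambda>e. e i)" by (simp add: depends_below_def env_trunc_def)
  ultimately show ?thesis unfolding PR_def using PRIMREC.PROJ by auto
qed

lemma PR_const: "PR (\<lambda>e. c)"
proof -
  have "(\<lambda>l. c) = CONSTANT c" by (simp add: fun_eq_iff CONSTANT_def)
  then show ?thesis unfolding PR_def depends_below_def using PRIMREC.CONSTANT by auto
qed

lemma PR_Suc_var: "PR (\<lambda>e. Suc (e 0))"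
proof -
  have "(\<lambda>l. Suc (list_env l 0)) = SC" by (simp add: fun_eq_iff SC_def list_env_def)
  moreover have "depends_below 1 (\<lambda>e. Suc (e 0))" by (simp add: depends_below_def env_trunc_def)
  ultimately show ?thesis unfolding PR_def using PRIMREC.SC by auto
qed

lemma PR_comp:
  assumes H: "PR H" and Fs: "\<forall>F\<in>set Fs. PR F"
  shows "PR (\<lambda>e. H (list_env (map (\<lambda>F. F e) Fs)))"
proof -
  have "(\<lambda>l. H (list_env (map (\<lambda>F. F (list_env l)) Fs))) =
      COMP (\<lambda>l. H (list_env l)) (map (\<lambda>F l. F (list_env l)) Fs)"
    by (simp add: fun_eq_iff COMP_def comp_def)
  moreover have "PRIMREC (COMP (\<lambda>l. H (list_env l)) (map (\<lambda>F l. F (list_env l)) Fs))"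
    using H Fs by (auto simp: PR_def intro!: PRIMREC.COMP)
  moreover have "\<forall>F\<in>set Fs. \<exists>k. depends_below k F" using Fs by (simp add: PR_def)
  then obtain k where "\<forall>F\<in>set Fs. depends_below k F" using depends_below_common by blast
  then have "map (\<lambda>F. F e) Fs = map (\<lambda>F. F (env_trunc k e)) Fs" for e
    by (auto simp: depends_below_def)
  then have "depends_below k (\<lambda>e. H (list_env (map (\<lambda>F. F e) Fs)))"
    unfolding depends_below_def by metis
  ultimately show ?thesis by (auto simp: PR_def)
qed

lemma PR_comp1: "PR (\<lambda>e. f (e 0)) \<Longrightarrow> PR A \<Longrightarrow> PR (\<lambda>e. f (A e))"
  using PR_comp[of "\<lambda>e. f (e 0)" "[A]"] by (simp add: list_env_Cons)

lemma PR_comp2: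
  assumes "PR (\<lambda>e. f (e 0) (e 1))" and "PR A" and "PR B" shows "PR (\<lambda>e. f (A e) (B e))"
proof -
  have "PR (\<lambda>e. f (list_env [A e, B e] 0) (list_env [A e, B e] 1))"
    using PR_comp[OF assms(1), of "[A, B]"] assms(2,3) by simp
  then show ?thesis by (simp add: One_nat_def)
qed

lemma PR_cong: "PR F \<Longrightarrow> (\<And>e. F e = G e) \<Longrightarrow> PR G"
  by (metis ext)

lemma PR_pred_cong: "PR_pred P \<Longrightarrow> (\<And>e. P e \<longleftrightarrow> Q e) \<Longrightarrow> PR_pred Q"
  by (subgoal_tac "P = Q") auto

lemma PR_of_bool: "PR_pred P \<Longrightarrow> PR (\<lambda>e. of_bool (P e))"
  by (simp add: PR_pred_def)

lemma PR_shift: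
  assumes "PR F" shows "PR (\<lambda>e. F (\<lambda>i. e (Suc i)))"
proof -
  obtain k where k: "depends_below k F" using assms by (auto simp: PR_def)
  have "PR (\<lambda>e. F (list_env (map (\<lambda>i. e (Suc i)) [0..<k])))"
    using PR_comp[OF assms, of "map (\<lambda>i e. e (Suc i)) [0..<k]"] by (auto simp: comp_def PR_var)
  moreover have "F (list_env (map (\<lambda>i. e (Suc i)) [0..<k])) = F (\<lambda>i. e (Suc i))" for e
    using k by (simp add: list_env_map_upt depends_below_def)
  ultimately show ?thesis by simp
qed

lemma depends_below_drop2:
  assumes dep: "depends_below k (\<lambda>e. G (e 0) (e 1) (\<lambda>i. e (Suc (Suc i))))" and k: "2 \<le> k"
  shows "G r y (env_trunc k e) = G r y e"
proof -
  define G' where "G' = (\<lambda>e. G (e 0) (e 1) (\<lambda>i. e (Suc (Suc i))))"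
  have G'_trunc: "G' (env_trunc k e) = G' e" for e
    using dep by (simp add: depends_below_def G'_def)
  have "G r y (env_trunc k e) = G' (case_nat r (case_nat y (env_trunc k e)))"
    by (simp add: G'_def)
  also have "\<dots> = G' (env_trunc k (case_nat r (case_nat y (env_trunc k e))))"
    by (rule G'_trunc[symmetric])
  also have "env_trunc k (case_nat r (case_nat y (env_trunc k e))) = env_trunc k (case_nat r (case_nat y e))"
    using k by (auto simp: env_trunc_def fun_eq_iff split: nat.split)
  also have "G' \<dots> = G' (case_nat r (case_nat y e))"
    by (rule G'_trunc)
  also have "\<dots> = G r y e"
    by (simp add: G'_def)
  finally show ?thesis .
qed

lemma PR_rec:
  assumes N: "PR N" and B: "PR B" and G: "PR (\<lambda>e. G (e 0) (e 1) (\<lambda>i. e (Suc (Suc i))))"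
  shows "PR (\<lambda>e. rec_nat (B e) (\<lambda>y r. G r y e) (N e))"
proof -
  define G' where "G' = (\<lambda>e. G (e 0) (e 1) (\<lambda>i. e (Suc (Suc i))))"
  obtain k0 where k0: "\<forall>F\<in>set [N, B, G']. depends_below k0 F"
    using N B G depends_below_common[of "[N, B, G']"] by (auto simp: PR_def G'_def)
  define k where "k = max k0 2"
  have dep: "depends_below k N" "depends_below k B" "depends_below k G'"
    using k0 by (auto simp: k_def intro: depends_below_mono)
  have N_trunc: "N (env_trunc k e) = N e" and B_trunc: "B (env_trunc k e) = B e" for e
    using dep(1,2) by (simp_all add: depends_below_def)
  have G_trunc: "G r y (env_trunc k e) = G r y e" for r y e
    using dep(3) by (intro depends_below_drop2) (simp_all add: G'_def k_def)
  let ?R = "COMP (PREC (\<lambda>l. B (list_env l)) (\<lambda>l. G' (list_env l))) ((\<lambda>l. N (list_env l)) # map PROJ [0..<k])"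
  have "PRIMREC ?R"
  proof (rule PRIMREC.COMP)
    show "PRIMREC (PREC (\<lambda>l. B (list_env l)) (\<lambda>l. G' (list_env l)))"
      using B G by (intro PRIMREC.PREC) (simp_all add: PR_def G'_def)
    show "\<forall>f\<in>set ((\<lambda>l. N (list_env l)) # map PROJ [0..<k]). PRIMREC f"
      using N by (auto simp: PR_def PRIMREC.PROJ)
  qed
  moreover have "?R = (\<lambda>l. rec_nat (B (list_env l)) (\<lambda>y r. G r y (list_env l)) (N (list_env l)))"
  proof
    fix l
    have "PROJ i l = list_env l i" for i by (simp add: PROJ_def list_env_def)
    then show "?R l = rec_nat (B (list_env l)) (\<lambda>y r. G r y (list_env l)) (N (list_env l))"
      by (simp add: COMP_def PREC_def comp_def list_env_Cons list_env_map_upt B_trunc G_trunc G'_def)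
  qed
  moreover have "depends_below k (\<lambda>e. rec_nat (B e) (\<lambda>y r. G r y e) (N e))"
    by (simp add: depends_below_def N_trunc B_trunc G_trunc)
  ultimately show ?thesis unfolding PR_def by auto
qed

section \<open>Closure properties\<close>

lemma PR_Suc: "PR A \<Longrightarrow> PR (\<lambda>e. Suc (A e))"
  by (rule PR_comp1[OF PR_Suc_var])

lemma PR_add: "PR A \<Longrightarrow> PR B \<Longrightarrow> PR (\<lambda>e. A e + B e)"
proof -
  assume "PR A" "PR B"
  then have "PR (\<lambda>e. rec_nat (B e) (\<lambda>y r. Suc r) (A e))"
    by (intro PR_rec PR_Suc_var)
  moreover have "rec_nat b (\<lambda>y r. Suc r) a = a + b" for a b :: nat
    by (induction a) auto
  ultimately show ?thesis by simp
qed

lemma PR_diff_one: "PR A \<Longrightarrow> PR (\<lambda>e. A e - 1)"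
proof -
  assume "PR A"
  then have "PR (\<lambda>e. rec_nat 0 (\<lambda>y r. y) (A e))"
    by (intro PR_rec PR_var PR_const)
  moreover have "rec_nat 0 (\<lambda>y r. y) a = a - 1" for a :: nat
    by (cases a) auto
  ultimately show ?thesis by simp
qed

lemma PR_diff: "PR A \<Longrightarrow> PR B \<Longrightarrow> PR (\<lambda>e. A e - B e)"
proof -
  assume "PR A" "PR B"
  then have "PR (\<lambda>e. rec_nat (A e) (\<lambda>y r. r - 1) (B e))"
    by (intro PR_rec PR_diff_one PR_var)
  moreover have "rec_nat a (\<lambda>y r. r - 1) b = a - b" for a b :: nat
    by (induction b) auto
  ultimately show ?thesis by simp
qed

lemma PR_mult: "PR A \<Longrightarrow> PR B \<Longrightarrow> PR (\<lambda>e. A e * B e)"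
proof -
  assume "PR A" "PR B"
  then have "PR (\<lambda>e. rec_nat 0 (\<lambda>y r. r + B e) (A e))"
    by (intro PR_rec PR_add PR_var PR_const PR_shift[OF PR_shift])
  moreover have "rec_nat 0 (\<lambda>y r. r + b) a = a * b" for a b :: nat
    by (induction a) auto
  ultimately show ?thesis by simp
qed

lemma PR_power: "PR A \<Longrightarrow> PR B \<Longrightarrow> PR (\<lambda>e. A e ^ B e)"
proof -
  assume "PR A" "PR B"
  then have "PR (\<lambda>e. rec_nat 1 (\<lambda>y r. r * A e) (B e))"
    by (intro PR_rec PR_mult PR_var PR_const PR_shift[OF PR_shift])
  moreover have "rec_nat 1 (\<lambda>y r. r * a) b = a ^ b" for a b :: nat
    by (induction b) auto
  ultimately show ?thesis by simp
qed

lemma PR_sum: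
  assumes "PR N" and "PR (\<lambda>e. F (e 0) (\<lambda>i. e (Suc i)))"
  shows "PR (\<lambda>e. \<Sum>k<N e. F k e)"
proof -
  have "PR (\<lambda>e. rec_nat 0 (\<lambda>y r. r + F y e) (N e))"
    using assms by (intro PR_rec PR_add PR_var PR_const) (simp_all add: PR_shift[OF assms(2)])
  moreover have "rec_nat 0 (\<lambda>y r. r + F y e) n = (\<Sum>k<n. F k e)" for n e
    by (induction n) auto
  ultimately show ?thesis by simp
qed

lemma PR_if: "PR_pred P \<Longrightarrow> PR A \<Longrightarrow> PR B \<Longrightarrow> PR (\<lambda>e. if P e then A e else B e)"
proof -
  assume "PR_pred P" "PR A" "PR B"
  then have "PR (\<lambda>e. of_bool (P e) * A e + (1 - of_bool (P e)) * B e)"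
    unfolding PR_pred_def by (intro PR_add PR_mult PR_diff PR_const)
  then show ?thesis by (rule PR_cong) simp
qed

lemma PR_pred_le: "PR A \<Longrightarrow> PR B \<Longrightarrow> PR_pred (\<lambda>e. A e \<le> B e)"
proof -
  assume "PR A" "PR B"
  then have "PR (\<lambda>e. 1 - (A e - B e))" by (intro PR_diff PR_const)
  then show ?thesis unfolding PR_pred_def by (rule PR_cong) simp
qed

lemma PR_pred_not: "PR_pred P \<Longrightarrow> PR_pred (\<lambda>e. \<not> P e)"
proof -
  assume "PR_pred P"
  then have "PR (\<lambda>e. 1 - of_bool (P e))" unfolding PR_pred_def by (intro PR_diff PR_const)
  then show ?thesis unfolding PR_pred_def by (rule PR_cong) simp
qed

lemma PR_pred_conj: "PR_pred P \<Longrightarrow> PR_pred Q \<Longrightarrow> PR_pred (\<lambda>e. P e \<and> Q e)"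
  unfolding PR_pred_def by (drule (1) PR_mult) (erule PR_cong, simp)

lemma PR_pred_imp: "PR_pred P \<Longrightarrow> PR_pred Q \<Longrightarrow> PR_pred (\<lambda>e. P e \<longrightarrow> Q e)"
  using PR_pred_not[OF PR_pred_conj[OF _ PR_pred_not]] by simp

lemma PR_pred_less: "PR A \<Longrightarrow> PR B \<Longrightarrow> PR_pred (\<lambda>e. A e < B e)"
  using PR_pred_not[OF PR_pred_le] by (simp add: not_le)

lemma PR_pred_eq: "PR A \<Longrightarrow> PR B \<Longrightarrow> PR_pred (\<lambda>e. A e = B e)"
  by (rule PR_pred_cong[OF PR_pred_conj[OF PR_pred_le[of A B] PR_pred_le[of B A]]]) auto

lemma PR_pred_all:
  assumes "PR N" and "PR_pred (\<lambda>e. P (e 0) (\<lambda>i. e (Suc i)))"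
  shows "PR_pred (\<lambda>e. \<forall>k<N e. P k e)"
proof -
  have "PR (\<lambda>e. \<Sum>k<N e. of_bool (\<not> P k e))"
    using assms(1) PR_pred_not[OF assms(2)] unfolding PR_pred_def by (rule PR_sum)
  then have "PR_pred (\<lambda>e. (\<Sum>k<N e. of_bool (\<not> P k e)) = (0::nat))"
    by (rule PR_pred_eq[OF _ PR_const])
  then show ?thesis by (rule PR_pred_cong) auto
qed

lemma PR_pred_ex: "PR N \<Longrightarrow> PR_pred (\<lambda>e. P (e 0) (\<lambda>i. e (Suc i))) \<Longrightarrow> PR_pred (\<lambda>e. \<exists>k<N e. P k e)"
  using PR_pred_not[OF PR_pred_all[OF _ PR_pred_not]] by simp

lemma sum_select_unique:
  assumes "P x" and "x < N" and "\<And>y. P y \<Longrightarrow> y = x"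
  shows "(\<Sum>y<N. if P y then y else 0) = (x::nat)"
proof -
  have "(\<Sum>y<N. if P y then y else 0) = (\<Sum>y<N. if y = x then y else 0)"
    using assms(1,3) by (intro sum.cong refl) metis
  also have "\<dots> = x" using assms(2) by (simp add: sum.delta')
  finally show ?thesis .
qed

lemma div_eq_sum_select:
  "(a::nat) div b = (\<Sum>q<Suc a. if b * q \<le> a \<and> a < b * Suc q then q else 0)"
proof (cases "b = 0")
  case False
  show ?thesis
  proof (rule sum_select_unique[symmetric])
    show "b * (a div b) \<le> a \<and> a < b * Suc (a div b)"
      using False by (simp add: dividend_less_times_div)
    show "a div b < Suc a" by (simp add: le_imp_less_Suc)
    show "q = a div b" if "b * q \<le> a \<and> a < b * Suc q" for q
      using that div_nat_eqI[of b q a] by simp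
  qed
qed simp

lemma PR_div:
  assumes "PR A" and "PR B" shows "PR (\<lambda>e. A e div B e)"
proof -
  have "PR (\<lambda>e. \<Sum>q<Suc (e 0). if e 1 * q \<le> e 0 \<and> e 0 < e 1 * Suc q then q else 0)"
    by (intro PR_sum PR_if PR_pred_conj PR_pred_le PR_pred_less PR_mult PR_Suc PR_var PR_const)
  then have "PR (\<lambda>e. e 0 div e 1)" by (rule PR_cong) (simp only: div_eq_sum_select)
  from PR_comp2[OF this assms] show ?thesis .
qed

lemma PR_mod: "PR A \<Longrightarrow> PR B \<Longrightarrow> PR (\<lambda>e. A e mod B e)"
proof -
  assume "PR A" "PR B"
  then have "PR (\<lambda>e. A e - B e * (A e div B e))" by (intro PR_diff PR_mult PR_div)
  then show ?thesis by (rule PR_cong) (simp add: minus_mult_div_eq_mod)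
qed

lemma PR_pred_odd:
  assumes "PR A" shows "PR_pred (\<lambda>e. odd (A e))"
proof -
  have "PR_pred (\<lambda>e. A e mod 2 = 1)" by (intro PR_pred_eq PR_mod assms PR_const)
  then show ?thesis by (rule PR_pred_cong) (simp add: odd_iff_mod_2_eq_one)
qed

lemma PR_pred_mem_set_decode:
  assumes "PR A" and "PR B" shows "PR_pred (\<lambda>e. A e \<in> set_decode (B e))"
  unfolding set_decode_def mem_Collect_eq
  by (rule PR_pred_odd[OF PR_div[OF assms(2) PR_power[OF PR_const assms(1)]]])

lemmas PR_intros = PR_var PR_const PR_Suc PR_add PR_diff PR_mult PR_power PR_div PR_mod PR_if PR_of_bool PR_sum
  PR_pred_le PR_pred_less PR_pred_eq PR_pred_not PR_pred_conj PR_pred_imp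
  PR_pred_all PR_pred_ex PR_pred_odd PR_pred_mem_set_decode

section \<open>Pairing and Fibonacci numbers\<close>

lemma PR_pair: "PR A \<Longrightarrow> PR B \<Longrightarrow> PR (\<lambda>e. pair (A e) (B e))"
proof -
  have "PR (\<lambda>e. (e 0 + e 1) * (e 0 + e 1 + 1) div 2 + e 0)" by (intro PR_intros)
  then have "PR (\<lambda>e. pair (e 0) (e 1))"
    by (rule PR_cong) (simp add: pair_def prod_encode_def triangle_def)
  then show "PR A \<Longrightarrow> PR B \<Longrightarrow> ?thesis" by (rule PR_comp2)
qed

lemma unpair_eq_sum_select:
  "fst (unpair m) = (\<Sum>x<Suc m. if \<exists>y<Suc m. pair x y = m then x else 0)"
  "snd (unpair m) = (\<Sum>y<Suc m. if \<exists>x<Suc m. pair x y = m then y else 0)"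
proof -
  obtain x y where xy: "unpair m = (x, y)" by fastforce
  then have m: "m = pair x y" by (metis pair_def prod_decode_inverse unpair_def)
  have le: "x < Suc m" "y < Suc m"
    unfolding m pair_def by (simp_all add: le_imp_less_Suc le_prod_encode_1 le_prod_encode_2)
  have inj: "pair x' y' = m \<longleftrightarrow> x' = x \<and> y' = y" for x' y'
    by (simp add: m pair_def prod_encode_eq)
  show "fst (unpair m) = (\<Sum>x<Suc m. if \<exists>y<Suc m. pair x y = m then x else 0)"
    by (rule sum_select_unique[symmetric]) (use le inj xy in auto)
  show "snd (unpair m) = (\<Sum>y<Suc m. if \<exists>x<Suc m. pair x y = m then y else 0)"
    by (rule sum_select_unique[symmetric]) (use le inj xy in auto)
qed

lemma PR_fst_unpair: "PR A \<Longrightarrow> PR (\<lambda>e. fst (unpair (A e)))"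
proof -
  have "PR (\<lambda>e. \<Sum>x<Suc (e 0). if \<exists>y<Suc (e 0). pair x y = e 0 then x else 0)"
    by (intro PR_intros PR_pair)
  then have "PR (\<lambda>e. fst (unpair (e 0)))" by (rule PR_cong) (simp only: unpair_eq_sum_select)
  then show "PR A \<Longrightarrow> ?thesis" by (rule PR_comp1)
qed

lemma PR_snd_unpair: "PR A \<Longrightarrow> PR (\<lambda>e. snd (unpair (A e)))"
proof -
  have "PR (\<lambda>e. \<Sum>y<Suc (e 0). if \<exists>x<Suc (e 0). pair x y = e 0 then y else 0)"
    by (intro PR_intros PR_pair)
  then have "PR (\<lambda>e. snd (unpair (e 0)))" by (rule PR_cong) (simp only: unpair_eq_sum_select)
  then show "PR A \<Longrightarrow> ?thesis" by (rule PR_comp1)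
qed

lemma unpair_pair [simp]: "unpair (pair x y) = (x, y)"
  by (simp add: unpair_def pair_def)

lemma fibZ_pair_iterate:
  "rec_nat (pair 1 1) (\<lambda>_ r. pair (snd (unpair r)) (fst (unpair r) + snd (unpair r))) n
    = pair (fibZ n) (fibZ (Suc n))"
  by (induction n) (simp_all add: add.commute)

lemma PR_fibZ: "PR A \<Longrightarrow> PR (\<lambda>e. fibZ (A e))"
proof -
  have "PR (\<lambda>e. fst (unpair (rec_nat (pair 1 1)
      (\<lambda>_ r. pair (snd (unpair r)) (fst (unpair r) + snd (unpair r))) (e 0))))"
    by (intro PR_fst_unpair PR_rec PR_pair PR_snd_unpair PR_intros)
  then have "PR (\<lambda>e. fibZ (e 0))"
    by (rule PR_cong) (simp only: fibZ_pair_iterate unpair_pair fst_conv)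
  then show "PR A \<Longrightarrow> ?thesis" by (rule PR_comp1)
qed

section \<open>Zeckendorf representations\<close>

lemma fibZ_pos: "0 < fibZ n"
  by (induction n rule: fibZ.induct) auto

lemma fibZ_mono: "a \<le> b \<Longrightarrow> fibZ a \<le> fibZ b"
proof (rule lift_Suc_mono_le[of fibZ])
  show "fibZ n \<le> fibZ (Suc n)" for n by (cases n rule: fibZ.cases) auto
qed

lemma fibZ_less_imp_less: "fibZ a < fibZ b \<Longrightarrow> a < b"
  using fibZ_mono[of b a] by linarith

lemma le_fibZ: "n \<le> fibZ n"
proof (induction n rule: fibZ.induct)
  case (3 n)
  then show ?case using fibZ_pos[of n] by simp
qed auto

lemma zeck_ok_subset: "zeck_ok S \<Longrightarrow> T \<subseteq> S \<Longrightarrow> zeck_ok T"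
  unfolding zeck_ok_def by (auto intro: finite_subset)

lemma zeck_sum_less_fibZ: "zeck_ok S \<Longrightarrow> \<forall>e\<in>S. e < k \<Longrightarrow> (\<Sum>e\<in>S. fibZ e) < fibZ k"
proof (induction k arbitrary: S rule: fibZ.induct)
  case 1
  then show ?case by simp
next
  case 2
  then have "S = {}" by (auto simp: zeck_ok_def)
  then show ?case by simp
next
  case (3 m)
  show ?case
  proof (cases "Suc m \<in> S")
    case False
    then have "\<forall>e\<in>S. e < Suc m" using "3.prems"(2) less_Suc_eq by auto
    then have "(\<Sum>e\<in>S. fibZ e) < fibZ (Suc m)" using "3.IH"(1) "3.prems"(1) by blast
    then show ?thesis by simp
  next
    case True
    have "m \<notin> S" using True "3.prems"(1) by (auto simp: zeck_ok_def)
    then have "\<forall>e\<in>S - {Suc m}. e < m" using "3.prems"(2) less_Suc_eq by fastforce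
    moreover have "zeck_ok (S - {Suc m})" using "3.prems"(1) by (rule zeck_ok_subset) auto
    ultimately have "(\<Sum>e\<in>S - {Suc m}. fibZ e) < fibZ m" using "3.IH"(2) by blast
    moreover have "(\<Sum>e\<in>S. fibZ e) = fibZ (Suc m) + (\<Sum>e\<in>S - {Suc m}. fibZ e)"
      using True "3.prems"(1) by (simp add: zeck_ok_def sum.remove)
    ultimately show ?thesis by simp
  qed
qed

lemma zeck_ok_ex_ge:
  assumes "zeck_ok A" and "zeck_ok B" and "(\<Sum>e\<in>A. fibZ e) = (\<Sum>e\<in>B. fibZ e)" and "b \<in> B"
  shows "\<exists>a\<in>A. b \<le> a"
proof (rule ccontr)
  assume "\<not> (\<exists>a\<in>A. b \<le> a)"
  then have "(\<Sum>e\<in>A. fibZ e) < fibZ b" using assms(1) by (intro zeck_sum_less_fibZ) auto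
  also have "fibZ b \<le> (\<Sum>e\<in>B. fibZ e)"
    using assms(2,4) by (intro member_le_sum) (auto simp: zeck_ok_def)
  finally show False using assms(3) by simp
qed

lemma zeck_unique:
  "zeck_ok S \<Longrightarrow> zeck_ok T \<Longrightarrow> (\<Sum>e\<in>S. fibZ e) = (\<Sum>e\<in>T. fibZ e) \<Longrightarrow> S = T"
proof (induction "\<Sum>e\<in>S. fibZ e" arbitrary: S T rule: less_induct)
  case less
  have fin: "finite S" "finite T" using less.prems(1,2) by (auto simp: zeck_ok_def)
  show ?case
  proof (cases "S = {}")
    case True
    then have "\<forall>t\<in>T. fibZ t = 0" using less.prems(3) fin by simp
    then show ?thesis using True fibZ_pos by (metis ex_in_conv less_numeral_extra(3))
  next
    case False
    define m where "m = Max S"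
    have "m \<in> S" and S_le: "\<forall>s\<in>S. s \<le> m" using False fin by (auto simp: m_def)
    obtain t where "t \<in> T" "m \<le> t" using zeck_ok_ex_ge[OF less.prems(2,1) _ \<open>m \<in> S\<close>] less.prems(3) by auto
    moreover obtain s where "s \<in> S" "t \<le> s" using zeck_ok_ex_ge[OF less.prems(1,2,3) \<open>t \<in> T\<close>] by auto
    ultimately have "m \<in> T" using S_le by (metis order_antisym order_trans)
    have sum_S: "(\<Sum>e\<in>S. fibZ e) = fibZ m + (\<Sum>e\<in>S - {m}. fibZ e)"
      using \<open>m \<in> S\<close> fin by (simp add: sum.remove)
    have sum_T: "(\<Sum>e\<in>T. fibZ e) = fibZ m + (\<Sum>e\<in>T - {m}. fibZ e)"
      using \<open>m \<in> T\<close> fin by (simp add: sum.remove)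
    have "S - {m} = T - {m}"
    proof (rule less.hyps)
      show "(\<Sum>e\<in>S - {m}. fibZ e) < (\<Sum>e\<in>S. fibZ e)" using sum_S fibZ_pos[of m] by simp
      show "zeck_ok (S - {m})" "zeck_ok (T - {m})"
        using less.prems(1,2) by (auto intro: zeck_ok_subset)
      show "(\<Sum>e\<in>S - {m}. fibZ e) = (\<Sum>e\<in>T - {m}. fibZ e)" using sum_S sum_T less.prems(3) by simp
    qed
    then show ?thesis using \<open>m \<in> S\<close> \<open>m \<in> T\<close> by blast
  qed
qed

lemma ex_fibZ_le_less: "\<exists>m\<ge>1. fibZ m \<le> Suc n \<and> Suc n < fibZ (Suc m)"
proof (induction n)
  case 0
  show ?case by (rule exI[of _ 1]) simp
next
  case (Suc n)
  then obtain m where m: "m \<ge> 1" "fibZ m \<le> Suc n" "Suc n < fibZ (Suc m)" by blast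
  show ?case
  proof (cases "Suc (Suc n) < fibZ (Suc m)")
    case True
    then show ?thesis using m by (intro exI[of _ m]) simp
  next
    case False
    then show ?thesis using m fibZ_pos[of m] by (intro exI[of _ "Suc m"]) simp
  qed
qed

lemma zeck_exists: "\<exists>S. zeck_ok S \<and> (\<Sum>e\<in>S. fibZ e) = n"
proof (induction n rule: less_induct)
  case (less n)
  show ?case
  proof (cases n)
    case 0
    then show ?thesis by (intro exI[of _ "{}"]) (simp add: zeck_ok_def)
  next
    case (Suc n')
    obtain m where m: "1 \<le> m" "fibZ m \<le> n" "n < fibZ (Suc m)"
      using ex_fibZ_le_less[of n'] Suc by blast
    then obtain j where "m = Suc j" by (cases m) auto
    with m have j: "fibZ (Suc j) \<le> n" "n < fibZ (Suc (Suc j))" by simp_all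
    define r where "r = n - fibZ (Suc j)"
    have "r < n" using j(1) fibZ_pos[of "Suc j"] by (simp add: r_def)
    then obtain T where T: "zeck_ok T" "(\<Sum>e\<in>T. fibZ e) = r" using less.IH by blast
    have T_less: "e < j" if "e \<in> T" for e
    proof (rule fibZ_less_imp_less)
      have "fibZ e \<le> r" using T that by (metis member_le_sum zero_le zeck_ok_def)
      also have "r < fibZ j" using j by (simp add: r_def)
      finally show "fibZ e < fibZ j" .
    qed
    have "zeck_ok (insert (Suc j) T)"
      using T(1) T_less unfolding zeck_ok_def by (auto dest: T_less)
    moreover have "Suc j \<notin> T" using T_less by fastforce
    then have "(\<Sum>e\<in>insert (Suc j) T. fibZ e) = n"
      using T j(1) by (simp add: zeck_ok_def r_def)
    ultimately show ?thesis by blast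
  qed
qed

lemma Z_spec: "zeck_ok (Z n)" "(\<Sum>e\<in>Z n. fibZ e) = n"
proof -
  have "\<exists>!S. zeck_ok S \<and> (\<Sum>e\<in>S. fibZ e) = n"
  proof (rule ex_ex1I)
    show "S = T" if "zeck_ok S \<and> (\<Sum>e\<in>S. fibZ e) = n" "zeck_ok T \<and> (\<Sum>e\<in>T. fibZ e) = n" for S T
      using that by (intro zeck_unique) auto
  qed (rule zeck_exists)
  then have "zeck_ok (Z n) \<and> (\<Sum>e\<in>Z n. fibZ e) = n"
    unfolding Z_def by (rule theI')
  then show "zeck_ok (Z n)" "(\<Sum>e\<in>Z n. fibZ e) = n" by simp_all
qed

lemma Z_unique: "zeck_ok S \<Longrightarrow> (\<Sum>e\<in>S. fibZ e) = n \<Longrightarrow> Z n = S"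
  by (rule zeck_unique[OF Z_spec(1)]) (simp_all add: Z_spec(2))

lemma finite_Z: "finite (Z n)"
  using Z_spec(1) by (simp add: zeck_ok_def)

lemma Z_le: "e \<in> Z n \<Longrightarrow> e \<le> n"
  using le_fibZ[of e] member_le_sum[of e "Z n" fibZ] finite_Z Z_spec(2) by simp

lemma Z_subset_lessThan: "Z n \<subseteq> {..<Suc n}"
  using Z_le by (auto simp: less_Suc_eq_le)

section \<open>Decoding Zeckendorf codes\<close>

lemma sum_eq_sum_lessThan_if: "A \<subseteq> {..<N::nat} \<Longrightarrow> sum f A = (\<Sum>x<N. if x \<in> A then f x else 0)"
  using sum.inter_restrict[of "{..<N}" f A] by (simp add: Int_absorb1)

lemma card_eq_sum_of_bool:
  assumes "A \<subseteq> {..<N::nat}" shows "card A = (\<Sum>x<N. of_bool (x \<in> A))"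
  using sum_eq_sum_lessThan_if[OF assms, of "\<lambda>_. 1::nat"] by (simp add: of_bool_def)

lemma set_decode_subset_lessThan: "set_decode b \<subseteq> {..<b}"
proof
  fix e assume "e \<in> set_decode b"
  then have "2 ^ e \<le> set_encode (set_decode b)"
    unfolding set_encode_def by (intro member_le_sum) auto
  then have "2 ^ e \<le> b" by simp
  with less_exp[of e] show "e \<in> {..<b}" by (simp del: less_exp)
qed

lemma set_encode_less_power: "A \<subseteq> {..<k} \<Longrightarrow> set_encode A < 2 ^ k"
proof -
  assume "A \<subseteq> {..<k}"
  then have "set_encode A \<le> (\<Sum>e\<in>{q. q < k}. 2 ^ e)"
    unfolding set_encode_def by (intro sum_mono2) auto
  also have "\<dots> = 2 ^ k - 1" by (simp add: mask_eq_sum_exp_nat)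
  finally show ?thesis using zero_less_power[of "2::nat" k] by linarith
qed

lemma set_encode_Z_eq_sum_select:
  "set_encode (Z n) = (\<Sum>b<2 ^ Suc n. if zeck_ok (set_decode b) \<and> (\<Sum>e\<in>set_decode b. fibZ e) = n then b else 0)"
proof (rule sum_select_unique[symmetric])
  show "zeck_ok (set_decode (set_encode (Z n))) \<and> (\<Sum>e\<in>set_decode (set_encode (Z n)). fibZ e) = n"
    using Z_spec by (simp add: finite_Z)
  show "set_encode (Z n) < 2 ^ Suc n"
    by (rule set_encode_less_power[OF Z_subset_lessThan])
  show "b = set_encode (Z n)" if "zeck_ok (set_decode b) \<and> (\<Sum>e\<in>set_decode b. fibZ e) = n" for b
    using that Z_unique by (metis set_decode_inverse)
qed

lemma zeck_ok_set_decode_iff: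
  "zeck_ok (set_decode b) \<longleftrightarrow> 0 \<notin> set_decode b \<and> (\<forall>e<b. e \<in> set_decode b \<longrightarrow> Suc e \<notin> set_decode b)"
  using set_decode_subset_lessThan[of b] by (auto simp: zeck_ok_def)

lemma PR_set_encode_Z: "PR A \<Longrightarrow> PR (\<lambda>e. set_encode (Z (A e)))"
proof -
  have "PR (\<lambda>e. \<Sum>b<2 ^ Suc (e 0). if (0 \<notin> set_decode b \<and> (\<forall>k<b. k \<in> set_decode b \<longrightarrow> Suc k \<notin> set_decode b))
      \<and> (\<Sum>k<b. if k \<in> set_decode b then fibZ k else 0) = e 0 then b else 0)"
    by (intro PR_intros PR_fibZ)
  then have "PR (\<lambda>e. set_encode (Z (e 0)))"
    by (rule PR_cong) (simp only: set_encode_Z_eq_sum_select zeck_ok_set_decode_iff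
        sum_eq_sum_lessThan_if[OF set_decode_subset_lessThan])
  then show "PR A \<Longrightarrow> ?thesis" by (rule PR_comp1)
qed

lemma PR_pred_mem_Z:
  assumes "PR A" and "PR B" shows "PR_pred (\<lambda>e. A e \<in> Z (B e))"
  using PR_pred_mem_set_decode[OF assms(1) PR_set_encode_Z[OF assms(2)]] by (simp add: finite_Z)

lemma IsCode_iff_bounded:
  "IsCode n \<longleftrightarrow> (\<forall>e<Suc n. e \<in> Z n \<longrightarrow> odd e)
     \<and> (\<forall>e<Suc n. \<forall>e'<Suc n. e \<in> Z n \<and> e' \<in> Z n \<and> e < e' \<longrightarrow> e + 2 \<le> e')"
  unfolding IsCode_def using Z_le by (auto simp: less_Suc_eq_le)

lemma PR_pred_IsCode: "PR A \<Longrightarrow> PR_pred (\<lambda>e. IsCode (A e))"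
proof -
  have "PR_pred (\<lambda>e. (\<forall>k<Suc (e 0). k \<in> Z (e 0) \<longrightarrow> odd k)
     \<and> (\<forall>k<Suc (e 0). \<forall>k'<Suc (e 0). k \<in> Z (e 0) \<and> k' \<in> Z (e 0) \<and> k < k' \<longrightarrow> k + 2 \<le> k'))"
    by (intro PR_intros PR_pred_mem_Z)
  then have "PR_pred (\<lambda>e. IsCode (e 0))" by (rule PR_pred_cong) (simp only: IsCode_iff_bounded)
  then show "PR A \<Longrightarrow> ?thesis" unfolding PR_pred_def by (rule PR_comp1)
qed

lemma PR_card_Z: "PR A \<Longrightarrow> PR (\<lambda>e. card (Z (A e)))"
proof -
  have "PR (\<lambda>e. \<Sum>k<Suc (e 0). of_bool (k \<in> Z (e 0)))"
    by (intro PR_intros PR_pred_mem_Z)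
  then have "PR (\<lambda>e. card (Z (e 0)))" by (rule PR_cong) (simp only: card_eq_sum_of_bool[OF Z_subset_lessThan])
  then show "PR A \<Longrightarrow> ?thesis" by (rule PR_comp1)
qed

lemma PR_Len: "PR A \<Longrightarrow> PR (\<lambda>e. Len (A e))"
  unfolding Len_def by (intro PR_if PR_pred_IsCode PR_card_Z PR_const)

lemma distinct_if_sorted_desc:
  fixes xs :: "'a::linorder list"
  assumes "sorted_wrt (>) xs" shows "distinct xs"
proof -
  have "sorted_wrt (<) (rev xs)" using assms by (simp add: sorted_wrt_rev)
  then show "distinct xs" by (simp add: strict_sorted_iff)
qed

lemma card_greater_nth_desc:
  fixes xs :: "'a::linorder list"
  assumes sorted: "sorted_wrt (>) xs" and j: "j < length xs"
  shows "card {x \<in> set xs. xs ! j < x} = j"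
proof -
  have "distinct xs" using sorted by (rule distinct_if_sorted_desc)
  have "{x \<in> set xs. xs ! j < x} = set (take j xs)"
  proof (intro set_eqI iffI)
    fix x assume "x \<in> {x \<in> set xs. xs ! j < x}"
    then obtain i where i: "i < length xs" "x = xs ! i" "xs ! j < xs ! i" by (auto simp: in_set_conv_nth)
    then have "i < j" using sorted_wrt_nth_less[OF sorted, of j i] j by (cases i j rule: linorder_cases) auto
    then show "x \<in> set (take j xs)" using i by (auto simp: in_set_conv_nth)
  next
    fix x assume "x \<in> set (take j xs)"
    then obtain i where "i < j" "x = xs ! i" using j by (auto simp: in_set_conv_nth)
    then show "x \<in> {x \<in> set xs. xs ! j < x}" using sorted_wrt_nth_less[OF sorted] j by auto
  qed
  then show ?thesis using distinct_card[OF distinct_take[OF \<open>distinct xs\<close>]] j by simp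
qed

lemma nth_desc_iff_card_greater:
  fixes xs :: "'a::linorder list"
  assumes sorted: "sorted_wrt (>) xs" and j: "j < length xs" and x: "x \<in> set xs"
  shows "x = xs ! j \<longleftrightarrow> card {y \<in> set xs. x < y} = j"
proof -
  have "distinct xs" using sorted by (rule distinct_if_sorted_desc)
  obtain i where "i < length xs" "x = xs ! i" using x by (auto simp: in_set_conv_nth)
  then show ?thesis
    using \<open>distinct xs\<close> j by (simp add: card_greater_nth_desc[OF sorted] nth_eq_iff_index_eq)
qed

lemma zlist_sorted: "sorted_wrt (>) (zlist n)"
  and set_zlist: "set (zlist n) = Z n"
  and length_zlist: "length (zlist n) = card (Z n)"
  by (simp_all add: zlist_def sorted_wrt_rev finite_Z)

(* zlist n ! j is unspecified for j out of range; Z_nth is a total version. *)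

definition Z_nth :: "nat \<Rightarrow> nat \<Rightarrow> nat" where
  "Z_nth n j = (if j < card (Z n) then zlist n ! j else 0)"

lemma Z_nth_eq_sum_select:
  "Z_nth n j = (if j < card (Z n)
     then \<Sum>e<Suc n. if e \<in> Z n \<and> (\<Sum>e'<Suc n. of_bool (e' \<in> Z n \<and> e < e')) = j then e else 0
     else 0)"
proof -
  have card_greater: "card {e' \<in> Z n. e < e'} = (\<Sum>e'<Suc n. of_bool (e' \<in> Z n \<and> e < e'))" for e
    using Z_subset_lessThan by (subst card_eq_sum_of_bool[of _ "Suc n"]) auto
  have "zlist n ! j = (\<Sum>e<Suc n. if e \<in> Z n \<and> card {e' \<in> Z n. e < e'} = j then e else 0)"
    if j: "j < card (Z n)"
  proof (rule sum_select_unique[symmetric])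
    have "zlist n ! j \<in> Z n" using j nth_mem set_zlist length_zlist by metis
    then show "zlist n ! j \<in> Z n \<and> card {e' \<in> Z n. zlist n ! j < e'} = j"
      using card_greater_nth_desc[OF zlist_sorted] j by (simp add: set_zlist length_zlist)
    then show "zlist n ! j < Suc n" using Z_le by (simp add: less_Suc_eq_le)
    show "e = zlist n ! j" if "e \<in> Z n \<and> card {e' \<in> Z n. e < e'} = j" for e
      using nth_desc_iff_card_greater[OF zlist_sorted] that j by (simp add: set_zlist length_zlist)
  qed
  then show ?thesis by (simp add: Z_nth_def card_greater)
qed

lemma PR_Z_nth: "PR A \<Longrightarrow> PR B \<Longrightarrow> PR (\<lambda>e. Z_nth (A e) (B e))"
proof -
  have "PR (\<lambda>e. if e 1 < card (Z (e 0))
     then \<Sum>k<Suc (e 0). if k \<in> Z (e 0) \<and> (\<Sum>k'<Suc (e 0). of_bool (k' \<in> Z (e 0) \<and> k < k')) = e 1 then k else 0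
     else 0)"
    by (intro PR_intros PR_pred_mem_Z PR_card_Z)
  then have "PR (\<lambda>e. Z_nth (e 0) (e 1))" by (rule PR_cong) (simp only: Z_nth_eq_sum_select)
  then show "PR A \<Longrightarrow> PR B \<Longrightarrow> ?thesis" by (rule PR_comp2)
qed

lemma SymbolAt_eq_Z_nth:
  "SymbolAt n i =
    (if IsCode n \<and> 1 \<le> i \<and> i \<le> Len n \<and> snd (unpair ((Z_nth n (i - 1) - 1) div 2)) = i
     then fst (unpair ((Z_nth n (i - 1) - 1) div 2)) else 0)"
proof (cases "IsCode n \<and> 1 \<le> i \<and> i \<le> Len n")
  case True
  then have "Z_nth n (i - 1) = zlist n ! (i - 1)" by (auto simp: Z_nth_def Len_def)
  then show ?thesis by (simp add: SymbolAt_def)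
qed (auto simp: SymbolAt_def)

lemma PR_SymbolAt: "PR A \<Longrightarrow> PR B \<Longrightarrow> PR (\<lambda>e. SymbolAt (A e) (B e))"
proof -
  have "PR (\<lambda>e. if IsCode (e 0) \<and> 1 \<le> e 1 \<and> e 1 \<le> Len (e 0)
        \<and> snd (unpair ((Z_nth (e 0) (e 1 - 1) - 1) div 2)) = e 1
      then fst (unpair ((Z_nth (e 0) (e 1 - 1) - 1) div 2)) else 0)"
    by (intro PR_intros PR_pred_IsCode PR_Len PR_Z_nth PR_fst_unpair PR_snd_unpair)
  then have "PR (\<lambda>e. SymbolAt (e 0) (e 1))" by (rule PR_cong) (simp only: SymbolAt_eq_Z_nth)
  then show "PR A \<Longrightarrow> PR B \<Longrightarrow> ?thesis" by (rule PR_comp2)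
qed

section \<open>Concatenation and substitution\<close>

definition sym_code :: "nat \<Rightarrow> nat \<Rightarrow> nat" where
  "sym_code a i = fibZ (2 * pair a i + 1)"

fun seq_code_from :: "nat \<Rightarrow> nat list \<Rightarrow> nat" where
  "seq_code_from off [] = 0"
| "seq_code_from off (a # as) = sym_code a (Suc off) + seq_code_from (Suc off) as"

lemma seq_code_from_eq_sum: "seq_code_from off as = (\<Sum>i<length as. sym_code (as ! i) (off + Suc i))"
  by (induction as arbitrary: off) (simp_all add: sum.lessThan_Suc_shift del: sum.lessThan_Suc)

lemma SeqZ_eq_seq_code_from: "SeqZ as = seq_code_from 0 as"
  by (simp add: SeqZ_def seq_code_from_eq_sum sym_code_def sum.atLeast1_atMost_eq)

lemma seq_code_from_append:
  "seq_code_from off (as @ bs) = seq_code_from off as + seq_code_from (off + length as) bs"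
  by (induction as arbitrary: off) simp_all

lemma seq_code_from_concat:
  "seq_code_from off (concat (map w as))
     = (\<Sum>i<length as. seq_code_from (off + (\<Sum>j<i. length (w (as ! j)))) (w (as ! i)))"
proof (induction as arbitrary: off)
  case (Cons a as)
  then show ?case
    by (simp add: seq_code_from_append sum.lessThan_Suc_shift add.assoc del: sum.lessThan_Suc)
qed simp

lemma PR_sym_code: "PR A \<Longrightarrow> PR B \<Longrightarrow> PR (\<lambda>e. sym_code (A e) (B e))"
proof -
  have "PR (\<lambda>e. fibZ (2 * pair (e 0) (e 1) + 1))" by (intro PR_intros PR_fibZ PR_pair)
  then have "PR (\<lambda>e. sym_code (e 0) (e 1))" by (simp add: sym_code_def)
  then show "PR A \<Longrightarrow> PR B \<Longrightarrow> ?thesis" by (rule PR_comp2)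
qed

lemma length_decodeZ: "length (decodeZ n) = Len n"
  by (simp add: decodeZ_def)

lemma nth_decodeZ: "i < Len n \<Longrightarrow> decodeZ n ! i = SymbolAt n (Suc i)"
  by (simp add: decodeZ_def nth_map_upt del: upt_Suc)

lemma seq_code_from_decodeZ:
  "seq_code_from off (decodeZ n) = (\<Sum>i<Len n. sym_code (SymbolAt n (Suc i)) (off + Suc i))"
  by (simp add: seq_code_from_eq_sum length_decodeZ nth_decodeZ)

lemma Concat_eq_sum:
  "Concat n m = (\<Sum>i<Len n. sym_code (SymbolAt n (Suc i)) (Suc i))
     + (\<Sum>i<Len m. sym_code (SymbolAt m (Suc i)) (Len n + Suc i))"
  by (simp add: Concat_def SeqZ_eq_seq_code_from seq_code_from_append seq_code_from_decodeZ length_decodeZ)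

definition SubZ_offset :: "nat \<Rightarrow> nat \<Rightarrow> nat \<Rightarrow> nat \<Rightarrow> nat" where
  "SubZ_offset v n m i = (\<Sum>j<i. if SymbolAt n (Suc j) = v then Len m else 1)"

lemma SubZ_eq_sum:
  "SubZ v n m = (\<Sum>i<Len n.
     if SymbolAt n (Suc i) = v
     then \<Sum>k<Len m. sym_code (SymbolAt m (Suc k)) (SubZ_offset v n m i + Suc k)
     else sym_code (SymbolAt n (Suc i)) (Suc (SubZ_offset v n m i)))"
  (is "_ = sum ?block _")
proof -
  define w where "w = (\<lambda>s. if s = v then decodeZ m else [s])"
  have "SubZ v n m = (\<Sum>i<Len n. seq_code_from (\<Sum>j<i. length (w (decodeZ n ! j))) (w (decodeZ n ! i)))"
    by (simp add: SubZ_def SeqZ_eq_seq_code_from seq_code_from_concat length_decodeZ w_def)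
  also have "\<dots> = sum ?block {..<Len n}"
  proof (rule sum.cong)
    fix i assume i: "i \<in> {..<Len n}"
    then have offset: "(\<Sum>j<i. length (w (decodeZ n ! j))) = SubZ_offset v n m i"
      unfolding SubZ_offset_def by (intro sum.cong) (simp_all add: w_def nth_decodeZ length_decodeZ)
    show "seq_code_from (\<Sum>j<i. length (w (decodeZ n ! j))) (w (decodeZ n ! i)) = ?block i"
      unfolding offset using i by (simp add: w_def nth_decodeZ seq_code_from_decodeZ)
  qed simp
  finally show ?thesis .
qed

lemma PR_SubZ_offset:
  assumes "PR A" and "PR B" and "PR C" shows "PR (\<lambda>e. SubZ_offset v (A e) (B e) (C e))"
proof -
  have "PR (\<lambda>e. SubZ_offset v (e 0) (e 1) (e 2))"
    unfolding SubZ_offset_def by (intro PR_intros PR_SymbolAt PR_Len)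
  from PR_comp[OF this, of "[A, B, C]"] show ?thesis
    using assms by (simp add: numeral_2_eq_2)
qed

theorem lemma5p9:
  shows "prim_rec1 (\<lambda>n. if IsCode n then 1 else 0)
       \<and> prim_rec1 Len
       \<and> prim_rec2 SymbolAt
       \<and> prim_rec2 Concat
       \<and> (\<forall>v. prim_rec2 (SubZ v))"
proof (intro conjI allI)
  show "prim_rec1 (\<lambda>n. if IsCode n then 1 else 0)"
    using PR_pred_IsCode[OF PR_var] by (intro prim_rec1_if_PR) (simp add: PR_pred_def of_bool_def)
  show "prim_rec1 Len" by (intro prim_rec1_if_PR PR_Len PR_var)
  show "prim_rec2 SymbolAt" by (intro prim_rec2_if_PR PR_SymbolAt PR_var)
  show "prim_rec2 Concat"
    by (rule prim_rec2_if_PR, unfold Concat_eq_sum) (intro PR_intros PR_sym_code PR_SymbolAt PR_Len)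
  fix v
  show "prim_rec2 (SubZ v)"
    by (rule prim_rec2_if_PR, unfold SubZ_eq_sum)
      (intro PR_intros PR_sym_code PR_SymbolAt PR_Len PR_SubZ_offset)
qed

end
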